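(* Let $f_1,\dots,f_d:\mathbb{R}^m\times\mathbb{R}^m\to\mathscr I^{p,q}$ be functions whose values $f_1(\vec x,\vec u),\dots,f_d(\vec x,\vec u)$ are, for every $(\vec x,\vec u)$, mutually coorthogonal blades. For each $l$ let $g_l$ be one of the four maps $\mathscr I^{p,q}\to\mathcal{G}^{p,q}$: $g(h)=e^{h}$, $g(h)=\cos(|h|)$, $g(h)=\frac{h}{|h|}\sin(|h|)$, or $g(h)=0$, where $|h|=\sqrt{-h^2}$. Then for every $\vec{A}\in\mathcal{G}^{p,q}$ and all $\vec x,\vec u\in\mathbb{R}^m$, $$\prod_{l=1}^{d}g_l\big(-f_l(\vec{x},\vec{u})\big)\,\vec{A}=\sum_{\vec{j}\in\{0,1\}^d}\vec{A}_{\vec c^{\vec{j}}(f_1(\vec x,\vec u),\dots,f_d(\vec x,\vec u))}\prod_{l=1}^{d}g_l\big(-(-1)^{j_l}f_l(\vec{x},\vec{u})\big),$$ where the products are ordered with $l$ increasing from left to right.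
   Context: $\mathcal{G}^{p,q}$ is the real geometric algebra of $\mathbb{R}^{p,q}$; $\mathscr I^{p,q}=\{i\in\mathcal{G}^{p,q}: i^2\in\mathbb{R},\ i^2<0\}$ (all such elements are invertible); $e^X=\sum_r X^r/r!$. Blades $\vec A,\vec B$ are coorthogonal if $\vec A\vec B=\pm\vec B\vec A$. For invertible $\vec B$: $\vec{A}_{\vec c^0(\vec{B})}=\frac12(\vec{A}+\vec{B}^{-1}\vec{A}\vec{B})$, $\vec{A}_{\vec c^1(\vec{B})}=\frac12(\vec{A}-\vec{B}^{-1}\vec{A}\vec{B})$, and for invertible $\vec B_1,\dots,\vec B_d$ and $\vec j\in\{0,1\}^d$: $\vec{A}_{\vec c^{\vec{j}}(\vec B_1,\dots,\vec B_d)}=((\vec{A}_{\vec c^{j_1}(\vec{B}_1)})_{\vec c^{j_2}(\vec{B}_2)}\cdots)_{\vec c^{j_d}(\vec{B}_d)}$ (for mutually coorthogonal invertible blades this does not depend on the order). *)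

theory Defs
  imports "HOL-Analysis.Analysis"
begin

text \<open>A multivector is represented by its
coordinates w.r.t. the basis blades e_S (S a subset of {0..<p+q}, e_S the product of
the e_i, i in S, in increasing order). Basis vectors e_i square to +1 for i < p and
to -1 for p \<le> i < p+q.\<close>

type_synonym mv = "nat set \<Rightarrow> real"

definition mv :: "nat \<Rightarrow> nat \<Rightarrow> mv \<Rightarrow> bool" where
  "mv p q A \<longleftrightarrow> (\<forall>S. \<not> S \<subseteq> {..<p+q} \<longrightarrow> A S = 0)"

definition metric :: "nat \<Rightarrow> nat \<Rightarrow> real" where
  "metric p i = (if i < p then 1 else -1)"

text \<open>e_X e_Y = bsign p X Y e_{X \<triangle> Y}\<close>
definition bsign :: "nat \<Rightarrow> nat set \<Rightarrow> nat set \<Rightarrow> real" where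
  "bsign p X Y = (-1) ^ card {(i,j). i \<in> X \<and> j \<in> Y \<and> j < i} * (\<Prod>i\<in>X \<inter> Y. metric p i)"

definition symdiff :: "nat set \<Rightarrow> nat set \<Rightarrow> nat set" where
  "symdiff X Y = (X - Y) \<union> (Y - X)"

definition gp :: "nat \<Rightarrow> nat \<Rightarrow> mv \<Rightarrow> mv \<Rightarrow> mv" where
  "gp p q A B = (\<lambda>S. if S \<subseteq> {..<p+q}
     then (\<Sum>X\<in>Pow {..<p+q}. A X * B (symdiff X S) * bsign p X (symdiff X S)) else 0)"

definition wedge :: "nat \<Rightarrow> nat \<Rightarrow> mv \<Rightarrow> mv \<Rightarrow> mv" where
  "wedge p q A B = (\<lambda>S. if S \<subseteq> {..<p+q}
     then (\<Sum>X\<in>Pow S. A X * B (S - X) * (-1) ^ card {(i,j). i \<in> X \<and> j \<in> S - X \<and> j < i})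
     else 0)"

definition scalar :: "real \<Rightarrow> mv" where
  "scalar r = (\<lambda>S. if S = {} then r else 0)"

definition smul :: "real \<Rightarrow> mv \<Rightarrow> mv" where
  "smul c A = (\<lambda>S. c * A S)"

definition madd :: "mv \<Rightarrow> mv \<Rightarrow> mv" where
  "madd A B = (\<lambda>S. A S + B S)"

definition mneg :: "mv \<Rightarrow> mv" where
  "mneg A = (\<lambda>S. - A S)"

definition mzero :: mv where
  "mzero = (\<lambda>S. 0)"

definition is_vec :: "nat \<Rightarrow> nat \<Rightarrow> mv \<Rightarrow> bool" where
  "is_vec p q v \<longleftrightarrow> mv p q v \<and> (\<forall>S. v S \<noteq> 0 \<longrightarrow> card S = 1)"

definition blade :: "nat \<Rightarrow> nat \<Rightarrow> mv \<Rightarrow> bool" where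
  "blade p q A \<longleftrightarrow> (\<exists>c vs. (\<forall>v\<in>set vs. is_vec p q v) \<and> A = foldr (wedge p q) vs (scalar c))"

definition coorth :: "nat \<Rightarrow> nat \<Rightarrow> mv \<Rightarrow> mv \<Rightarrow> bool" where
  "coorth p q A B \<longleftrightarrow> gp p q A B = gp p q B A \<or> gp p q A B = mneg (gp p q B A)"

definition Iset :: "nat \<Rightarrow> nat \<Rightarrow> mv set" where
  "Iset p q = {i. mv p q i \<and> (\<exists>r::real. gp p q i i = scalar r \<and> r < 0)}"

definition minv :: "nat \<Rightarrow> nat \<Rightarrow> mv \<Rightarrow> mv" where
  "minv p q B = (THE C. mv p q C \<and> gp p q B C = scalar 1 \<and> gp p q C B = scalar 1)"

primrec mpow :: "nat \<Rightarrow> nat \<Rightarrow> mv \<Rightarrow> nat \<Rightarrow> mv" where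
  "mpow p q X 0 = scalar 1"
| "mpow p q X (Suc n) = gp p q (mpow p q X n) X"

definition mexp :: "nat \<Rightarrow> nat \<Rightarrow> mv \<Rightarrow> mv" where
  "mexp p q X = (\<lambda>S. \<Sum>r. mpow p q X r S / fact r)"

text \<open>|h| = sqrt(-h^2) for h in I^{p,q} (h^2 is a scalar)\<close>
definition mabs :: "nat \<Rightarrow> nat \<Rightarrow> mv \<Rightarrow> real" where
  "mabs p q h = sqrt (- gp p q h h {})"

datatype gkind = GExp | GCos | GSin | GZero

fun gfun :: "nat \<Rightarrow> nat \<Rightarrow> gkind \<Rightarrow> mv \<Rightarrow> mv" where
  "gfun p q GExp h = mexp p q h"
| "gfun p q GCos h = scalar (cos (mabs p q h))"
| "gfun p q GSin h = smul (sin (mabs p q h) / mabs p q h) h"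
| "gfun p q GZero h = mzero"

definition mprod :: "nat \<Rightarrow> nat \<Rightarrow> mv list \<Rightarrow> mv" where
  "mprod p q xs = foldr (gp p q) xs (scalar 1)"

text \<open>A_{c^j(B)} = 1/2 (A + (-1)^j B^{-1} A B)\<close>
definition cproj1 :: "nat \<Rightarrow> nat \<Rightarrow> nat \<Rightarrow> mv \<Rightarrow> mv \<Rightarrow> mv" where
  "cproj1 p q j B A = smul (1/2) (madd A (smul ((-1) ^ j) (gp p q (gp p q (minv p q B) A) B)))"

fun cproj :: "nat \<Rightarrow> nat \<Rightarrow> mv \<Rightarrow> (nat \<times> mv) list \<Rightarrow> mv" where
  "cproj p q A [] = A"
| "cproj p q A ((j, B) # rest) = cproj p q (cproj1 p q j B A) rest"

end

theory Submission
  imports Defs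
begin

text \<open>Write A_j for the coorthogonal parts of A with respect to B_1, ..., B_d. Since
  B^-1 = B / B^2 for B in I^{p,q}, the part A_{c^j(B)} satisfies B A_{c^j(B)} = (-1)^j A_{c^j(B)} B,
  and projecting further along blades that commute or anticommute with B preserves this relation.
  Hence B_l A_j = (-1)^{j_l} A_j B_l for every l. Each of the four functions g is a power series in
  h, or a function of |h| times 1 or h, so it follows that g(-B_l) A_j = A_j g(-(-1)^{j_l} B_l).
  Moving the product past A_j factor by factor and summing over A = sum_j A_j gives the identity.\<close>

section \<open>The sign cocycle and associativity\<close>

text \<open>The sign of \<open>e\<^sub>X e\<^sub>Y\<close> factorises over the pairs \<open>(i, j) \<in> X \<times> Y\<close>; since every factor squares
  to 1, this turns the cocycle identity behind associativity into bookkeeping of products.\<close>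

definition pair_sign :: "nat \<Rightarrow> nat \<Rightarrow> nat \<Rightarrow> real" where
  "pair_sign p i j = (if j < i then -1 else 1) * (if i = j then metric p i else 1)"

lemma pair_sign_square: "pair_sign p i j * pair_sign p i j = 1"
  by (simp add: pair_sign_def metric_def)

lemma bsign_eq_prod_pair_sign:
  assumes "finite X" "finite Y"
  shows "bsign p X Y = (\<Prod>i\<in>X. \<Prod>j\<in>Y. pair_sign p i j)"
proof -
  have "{(i,j). i \<in> X \<and> j \<in> Y \<and> j < i} = {z \<in> X \<times> Y. snd z < fst z}" by auto
  hence "(-1::real) ^ card {(i,j). i \<in> X \<and> j \<in> Y \<and> j < i}
      = (\<Prod>z\<in>{z \<in> X \<times> Y. snd z < fst z}. -1)"
    by simp
  also have "\<dots> = (\<Prod>z\<in>X \<times> Y. if snd z < fst z then -1 else 1)"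
    using assms prod.inter_filter[of "X \<times> Y" "\<lambda>_. -1::real" "\<lambda>z. snd z < fst z"] by simp
  also have "\<dots> = (\<Prod>i\<in>X. \<Prod>j\<in>Y. if j < i then -1 else 1)"
    by (simp add: prod.cartesian_product case_prod_beta)
  finally have order_part: "(-1::real) ^ card {(i,j). i \<in> X \<and> j \<in> Y \<and> j < i}
      = (\<Prod>i\<in>X. \<Prod>j\<in>Y. if j < i then -1 else 1)" .
  have "X \<inter> Y = {i \<in> X. i \<in> Y}" by auto
  hence "(\<Prod>i\<in>X \<inter> Y. metric p i) = (\<Prod>i\<in>X. if i \<in> Y then metric p i else 1)"
    using assms by (simp add: prod.inter_filter)
  also have "\<dots> = (\<Prod>i\<in>X. \<Prod>j\<in>Y. if i = j then metric p i else 1)"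
    using assms by (intro prod.cong) auto
  finally have metric_part: "(\<Prod>i\<in>X \<inter> Y. metric p i)
      = (\<Prod>i\<in>X. \<Prod>j\<in>Y. if i = j then metric p i else 1)" .
  show ?thesis
    unfolding bsign_def order_part metric_part pair_sign_def prod.distrib ..
qed

lemma prod_symdiff:
  fixes g :: "nat \<Rightarrow> 'a::comm_monoid_mult"
  assumes "finite X" "finite Y" "\<And>i. g i * g i = 1"
  shows "prod g (symdiff X Y) = prod g X * prod g Y"
proof -
  have "prod g X * prod g Y
      = prod g (X - Y) * prod g (Y - X) * (prod g (X \<inter> Y) * prod g (Y \<inter> X))"
    using assms by (simp add: prod.Int_Diff[of X g Y] prod.Int_Diff[of Y g X] ac_simps)
  also have "prod g (X \<inter> Y) * prod g (Y \<inter> X) = 1"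
    by (simp add: Int_commute prod.distrib[symmetric] assms(3))
  also have "prod g (X - Y) * prod g (Y - X) = prod g (symdiff X Y)"
    unfolding symdiff_def using assms by (intro prod.union_disjoint[symmetric]) auto
  finally show ?thesis by simp
qed

lemma bsign_symdiff_left:
  assumes "finite X" "finite Y" "finite Z"
  shows "bsign p (symdiff X Y) Z = bsign p X Z * bsign p Y Z"
proof -
  have "(\<Prod>j\<in>Z. pair_sign p i j) * (\<Prod>j\<in>Z. pair_sign p i j) = 1" for i
    by (simp add: prod.distrib[symmetric] pair_sign_square)
  moreover have "finite (symdiff X Y)" using assms by (simp add: symdiff_def)
  ultimately show ?thesis
    using assms by (simp add: bsign_eq_prod_pair_sign prod_symdiff)
qed

lemma bsign_symdiff_right:
  assumes "finite X" "finite Y" "finite Z"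
  shows "bsign p X (symdiff Y Z) = bsign p X Y * bsign p X Z"
proof -
  have "finite (symdiff Y Z)" using assms by (simp add: symdiff_def)
  thus ?thesis
    using assms by (simp add: bsign_eq_prod_pair_sign prod_symdiff pair_sign_square prod.distrib)
qed

lemma bsign_cocycle:
  assumes "finite X" "finite Y" "finite Z"
  shows "bsign p X Y * bsign p (symdiff X Y) Z = bsign p X (symdiff Y Z) * bsign p Y Z"
  using assms by (simp add: bsign_symdiff_left bsign_symdiff_right ac_simps)

lemma abs_bsign: "\<bar>bsign p X Y\<bar> = 1"
  by (simp add: bsign_def abs_prod abs_mult metric_def, intro prod.neutral, simp)

lemma bsign_empty [simp]: "bsign p {} Y = 1" "bsign p X {} = 1"
  by (simp_all add: bsign_def)

lemma symdiff_cancel_left [simp]: "symdiff X (symdiff X Y) = Y"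
  by (auto simp: symdiff_def)

lemma symdiff_empty [simp]: "symdiff X {} = X" "symdiff {} X = X" "symdiff X X = {}"
  by (auto simp: symdiff_def)

lemma symdiff_eq_empty_iff: "symdiff X Y = {} \<longleftrightarrow> X = Y"
  by (auto simp: symdiff_def)

lemma symdiff_subset: "X \<subseteq> U \<Longrightarrow> Y \<subseteq> U \<Longrightarrow> symdiff X Y \<subseteq> U"
  by (auto simp: symdiff_def)

lemma symdiff_symdiff_same_left: "symdiff (symdiff X Y) (symdiff X Z) = symdiff Y Z"
  by (auto simp: symdiff_def)

lemma symdiff_symdiff_same_middle: "symdiff (symdiff X Y) (symdiff Y Z) = symdiff X Z"
  by (auto simp: symdiff_def)

lemma sum_Pow_reindex_symdiff:
  assumes "X \<subseteq> U"
  shows "(\<Sum>Y\<in>Pow U. g Y) = (\<Sum>Y\<in>Pow U. g (symdiff X Y))"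
  by (rule sum.reindex_bij_witness[of _ "symdiff X" "symdiff X"])
     (use assms in \<open>simp_all add: symdiff_subset\<close>)

lemma gp_assoc: "gp p q (gp p q A B) C = gp p q A (gp p q B C)"
proof (rule ext)
  fix S
  let ?U = "{..<p+q}" and ?b = "bsign p" and ?s = "symdiff"
  show "gp p q (gp p q A B) C S = gp p q A (gp p q B C) S"
  proof (cases "S \<subseteq> ?U")
    case False thus ?thesis by (simp add: gp_def)
  next
    case True
    have "gp p q (gp p q A B) C S = (\<Sum>Y\<in>Pow ?U.
        (\<Sum>X\<in>Pow ?U. A X * B (?s X Y) * ?b X (?s X Y)) * C (?s Y S) * ?b Y (?s Y S))"
      using True by (simp add: gp_def)
    also have "\<dots> = (\<Sum>Y\<in>Pow ?U. \<Sum>X\<in>Pow ?U.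
        A X * B (?s X Y) * C (?s Y S) * (?b X (?s X Y) * ?b Y (?s Y S)))"
      unfolding sum_distrib_right by (simp add: mult_ac)
    also have "\<dots> = (\<Sum>X\<in>Pow ?U. \<Sum>Y\<in>Pow ?U.
        A X * B (?s X Y) * C (?s Y S) * (?b X (?s X Y) * ?b Y (?s Y S)))"
      by (rule sum.swap)
    also have "\<dots> = (\<Sum>X\<in>Pow ?U. \<Sum>Y\<in>Pow ?U.
        A X * B (?s X Y) * C (?s Y S) * (?b (?s X Y) (?s Y S) * ?b X (?s X S)))"
    proof (intro sum.cong refl)
      fix X Y assume "X \<in> Pow ?U" "Y \<in> Pow ?U"
      hence "?b X (?s X Y) * ?b (?s X (?s X Y)) (?s Y S)
          = ?b X (?s (?s X Y) (?s Y S)) * ?b (?s X Y) (?s Y S)"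
        using True by (intro bsign_cocycle) (auto intro: finite_subset simp: symdiff_def)
      thus "A X * B (?s X Y) * C (?s Y S) * (?b X (?s X Y) * ?b Y (?s Y S)) =
            A X * B (?s X Y) * C (?s Y S) * (?b (?s X Y) (?s Y S) * ?b X (?s X S))"
        by (simp add: symdiff_symdiff_same_middle mult_ac)
    qed
    also have "\<dots> = (\<Sum>X\<in>Pow ?U. A X * (\<Sum>Y\<in>Pow ?U. B (?s X Y) * C (?s (?s X Y) (?s X S))
        * ?b (?s X Y) (?s (?s X Y) (?s X S))) * ?b X (?s X S))"
      by (simp add: sum_distrib_left sum_distrib_right symdiff_symdiff_same_left mult_ac)
    also have "\<dots> = (\<Sum>X\<in>Pow ?U. A X * (\<Sum>Z\<in>Pow ?U. B Z * C (?s Z (?s X S))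
        * ?b Z (?s Z (?s X S))) * ?b X (?s X S))"
      by (intro sum.cong refl arg_cong2[where f="(*)"] sum_Pow_reindex_symdiff[symmetric]) auto
    also have "\<dots> = gp p q A (gp p q B C) S"
      using True by (simp add: gp_def symdiff_subset)
    finally show ?thesis .
  qed
qed

section \<open>Linearity and units\<close>

lemma gp_madd_left: "gp p q (madd A B) C = madd (gp p q A C) (gp p q B C)"
  by (rule ext) (simp add: gp_def madd_def algebra_simps sum.distrib)

lemma gp_madd_right: "gp p q C (madd A B) = madd (gp p q C A) (gp p q C B)"
  by (rule ext) (simp add: gp_def madd_def algebra_simps sum.distrib)

lemma gp_smul_left: "gp p q (smul c A) B = smul c (gp p q A B)"
  by (rule ext) (simp add: gp_def smul_def algebra_simps sum_distrib_left)

lemma gp_smul_right: "gp p q B (smul c A) = smul c (gp p q B A)"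
  by (rule ext) (simp add: gp_def smul_def algebra_simps sum_distrib_left)

lemma gp_mzero_left: "gp p q mzero A = mzero"
  by (rule ext) (simp add: gp_def mzero_def)

lemma gp_mzero_right: "gp p q A mzero = mzero"
  by (rule ext) (simp add: gp_def mzero_def)

lemma gp_sum_right: "gp p q X (\<lambda>S. \<Sum>j\<in>J. F j S) = (\<lambda>S. \<Sum>j\<in>J. gp p q X (F j) S)"
  by (rule ext) (auto simp: gp_def sum_distrib_left sum_distrib_right intro: sum.swap)

lemma gp_scalar_left:
  assumes "mv p q A"
  shows "gp p q (scalar c) A = smul c A"
proof (rule ext)
  fix S
  show "gp p q (scalar c) A S = smul c A S"
  proof (cases "S \<subseteq> {..<p+q}")
    case True
    have "gp p q (scalar c) A S = (\<Sum>X\<in>Pow {..<p+q}. if X = {} then c * A S else 0)"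
      unfolding gp_def if_P[OF True] by (rule sum.cong) (auto simp: scalar_def)
    thus ?thesis by (simp add: sum.delta smul_def)
  next
    case False thus ?thesis using assms by (simp add: gp_def smul_def mv_def)
  qed
qed

lemma gp_scalar_right:
  assumes "mv p q A"
  shows "gp p q A (scalar c) = smul c A"
proof (rule ext)
  fix S
  show "gp p q A (scalar c) S = smul c A S"
  proof (cases "S \<subseteq> {..<p+q}")
    case True
    have "gp p q A (scalar c) S = (\<Sum>X\<in>Pow {..<p+q}. if X = S then c * A S else 0)"
      unfolding gp_def if_P[OF True]
      by (rule sum.cong) (auto simp: scalar_def symdiff_eq_empty_iff)
    thus ?thesis using True by (simp add: sum.delta smul_def)
  next
    case False thus ?thesis using assms by (simp add: gp_def smul_def mv_def)
  qed
qed

lemma mv_gp [simp]: "mv p q (gp p q A B)"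
  by (simp add: mv_def gp_def)

lemma mv_madd [simp]: "mv p q A \<Longrightarrow> mv p q B \<Longrightarrow> mv p q (madd A B)"
  by (simp add: mv_def madd_def)

lemma mv_smul [simp]: "mv p q A \<Longrightarrow> mv p q (smul c A)"
  by (simp add: mv_def smul_def)

lemma mv_scalar [simp]: "mv p q (scalar c)"
  by (simp add: mv_def scalar_def)

lemma mv_mpow [simp]: "mv p q (mpow p q X n)"
  by (cases n) auto

lemma mneg_eq_smul: "mneg A = smul (-1) A"
  by (simp add: mneg_def smul_def fun_eq_iff)

lemma smul_smul [simp]: "smul a (smul b A) = smul (a * b) A"
  by (simp add: smul_def fun_eq_iff)

lemma smul_one [simp]: "smul 1 A = A"
  by (simp add: smul_def fun_eq_iff)

lemma minv_eq_smul:
  assumes "mv p q B" "gp p q B B = scalar r" "r \<noteq> 0"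
  shows "minv p q B = smul (1/r) B"
  unfolding minv_def
proof (rule the_equality)
  have left_inv: "gp p q (smul (1/r) B) B = scalar 1"
    using assms by (simp add: gp_smul_left) (simp add: smul_def scalar_def fun_eq_iff)
  then show "mv p q (smul (1/r) B) \<and> gp p q B (smul (1/r) B) = scalar 1
      \<and> gp p q (smul (1/r) B) B = scalar 1"
    using assms by (simp add: gp_smul_right) (simp add: smul_def scalar_def fun_eq_iff)
  fix C assume C: "mv p q C \<and> gp p q B C = scalar 1 \<and> gp p q C B = scalar 1"
  have "C = gp p q (gp p q (smul (1/r) B) B) C" using C by (simp add: left_inv gp_scalar_left)
  also have "\<dots> = smul (1/r) B" using C assms by (simp add: gp_assoc gp_scalar_right)
  finally show "C = smul (1/r) B" .
qed

lemma IsetE: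
  assumes "B \<in> Iset p q"
  obtains r where "mv p q B" "gp p q B B = scalar r" "r \<noteq> 0" "minv p q B = smul (1/r) B"
proof -
  from assms obtain r where "mv p q B" "gp p q B B = scalar r" "r < 0"
    by (auto simp: Iset_def)
  with that minv_eq_smul[of p q B r] show ?thesis by auto
qed

section \<open>The exponential series\<close>

text \<open>The coordinate l1-norm is submultiplicative since \<open>|bsign p X Y| = 1\<close>, so every
  coordinate of the exponential series is dominated by the real series of \<open>exp (mnorm p q X)\<close>.\<close>

definition mnorm :: "nat \<Rightarrow> nat \<Rightarrow> mv \<Rightarrow> real" where
  "mnorm p q A = (\<Sum>S\<in>Pow {..<p+q}. \<bar>A S\<bar>)"

lemma mnorm_nonneg: "0 \<le> mnorm p q A"
  by (simp add: mnorm_def sum_nonneg)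

lemma abs_coord_le_mnorm:
  assumes "mv p q A"
  shows "\<bar>A T\<bar> \<le> mnorm p q A"
proof (cases "T \<subseteq> {..<p+q}")
  case True thus ?thesis
    unfolding mnorm_def by (intro member_le_sum[where f="\<lambda>S. \<bar>A S\<bar>"]) auto
next
  case False thus ?thesis using assms by (simp add: mv_def mnorm_nonneg)
qed

lemma mnorm_gp_le: "mnorm p q (gp p q A B) \<le> mnorm p q A * mnorm p q B"
proof -
  let ?U = "{..<p+q}"
  have "mnorm p q (gp p q A B)
      = (\<Sum>S\<in>Pow ?U. \<bar>\<Sum>X\<in>Pow ?U. A X * B (symdiff X S) * bsign p X (symdiff X S)\<bar>)"
    unfolding mnorm_def by (intro sum.cong refl) (auto simp: gp_def)
  also have "\<dots> \<le> (\<Sum>S\<in>Pow ?U. \<Sum>X\<in>Pow ?U. \<bar>A X\<bar> * \<bar>B (symdiff X S)\<bar>)"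
    by (intro sum_mono order.trans[OF sum_abs]) (simp add: abs_mult abs_bsign)
  also have "\<dots> = (\<Sum>X\<in>Pow ?U. \<bar>A X\<bar> * (\<Sum>S\<in>Pow ?U. \<bar>B (symdiff X S)\<bar>))"
    by (subst sum.swap) (simp add: sum_distrib_left)
  also have "\<dots> = (\<Sum>X\<in>Pow ?U. \<bar>A X\<bar> * mnorm p q B)"
    unfolding mnorm_def
    by (intro sum.cong refl arg_cong2[where f="(*)"] sum_Pow_reindex_symdiff[symmetric]) auto
  also have "\<dots> = mnorm p q A * mnorm p q B"
    by (simp add: mnorm_def sum_distrib_right)
  finally show ?thesis .
qed

lemma mnorm_mpow_le: "mnorm p q (mpow p q X n) \<le> mnorm p q X ^ n"
proof (induction n)
  case 0 thus ?case
    by (simp add: mnorm_def scalar_def if_distrib sum.delta cong: if_cong)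
next
  case (Suc n)
  have "mnorm p q (mpow p q X (Suc n)) \<le> mnorm p q (mpow p q X n) * mnorm p q X"
    by (simp add: mnorm_gp_le)
  also have "\<dots> \<le> mnorm p q X ^ n * mnorm p q X"
    by (intro mult_right_mono Suc mnorm_nonneg)
  finally show ?case by (simp add: mult.commute)
qed

lemma summable_mexp_coord: "summable (\<lambda>r. mpow p q X r T / fact r)"
proof (rule summable_comparison_test)
  show "summable (\<lambda>r. inverse (fact r) * mnorm p q X ^ r)" by (rule summable_exp)
  have "\<bar>mpow p q X n T\<bar> \<le> mnorm p q X ^ n" for n
    using abs_coord_le_mnorm[OF mv_mpow] mnorm_mpow_le order.trans by blast
  then show "\<exists>N. \<forall>n\<ge>N. norm (mpow p q X n T / fact n) \<le> inverse (fact n) * mnorm p q X ^ n"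
    by (simp add: divide_inverse mult.commute abs_mult mult_left_mono)
qed

lemma gp_mexp_left: "gp p q (mexp p q X) a = (\<lambda>S. \<Sum>r. gp p q (mpow p q X r) a S / fact r)"
proof (rule ext)
  fix S
  let ?U = "{..<p+q}" and ?c = "\<lambda>T. a (symdiff T S) * bsign p T (symdiff T S)"
  show "gp p q (mexp p q X) a S = (\<Sum>r. gp p q (mpow p q X r) a S / fact r)"
  proof (cases "S \<subseteq> ?U")
    case False thus ?thesis by (simp add: gp_def)
  next
    case True
    have "gp p q (mexp p q X) a S = (\<Sum>T\<in>Pow ?U. (\<Sum>r. mpow p q X r T / fact r) * ?c T)"
      using True by (simp add: gp_def mexp_def mult.assoc)
    also have "\<dots> = (\<Sum>T\<in>Pow ?U. \<Sum>r. mpow p q X r T / fact r * ?c T)"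
      by (intro sum.cong refl suminf_mult2 summable_mexp_coord)
    also have "\<dots> = (\<Sum>r. \<Sum>T\<in>Pow ?U. mpow p q X r T / fact r * ?c T)"
      by (intro suminf_sum[symmetric] summable_mult2 summable_mexp_coord)
    also have "\<dots> = (\<Sum>r. gp p q (mpow p q X r) a S / fact r)"
      using True by (simp add: gp_def sum_divide_distrib mult_ac)
    finally show ?thesis .
  qed
qed

lemma gp_mexp_right: "gp p q a (mexp p q X) = (\<lambda>S. \<Sum>r. gp p q a (mpow p q X r) S / fact r)"
proof (rule ext)
  fix S
  let ?U = "{..<p+q}" and ?c = "\<lambda>T. a T * bsign p T (symdiff T S)"
  show "gp p q a (mexp p q X) S = (\<Sum>r. gp p q a (mpow p q X r) S / fact r)"
  proof (cases "S \<subseteq> ?U")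
    case False thus ?thesis by (simp add: gp_def)
  next
    case True
    have "gp p q a (mexp p q X) S
        = (\<Sum>T\<in>Pow ?U. (\<Sum>r. mpow p q X r (symdiff T S) / fact r) * ?c T)"
      using True by (simp add: gp_def mexp_def mult_ac)
    also have "\<dots> = (\<Sum>T\<in>Pow ?U. \<Sum>r. mpow p q X r (symdiff T S) / fact r * ?c T)"
      by (intro sum.cong refl suminf_mult2 summable_mexp_coord)
    also have "\<dots> = (\<Sum>r. \<Sum>T\<in>Pow ?U. mpow p q X r (symdiff T S) / fact r * ?c T)"
      by (intro suminf_sum[symmetric] summable_mult2 summable_mexp_coord)
    also have "\<dots> = (\<Sum>r. gp p q a (mpow p q X r) S / fact r)"
      using True by (simp add: gp_def sum_divide_distrib mult_ac)
    finally show ?thesis .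
  qed
qed

section \<open>Twisted commutation\<close>

lemma mpow_smul_twisted_comm:
  assumes "mv p q a" "gp p q h a = smul s (gp p q a h)"
  shows "gp p q (mpow p q (smul c h) n) a = gp p q a (mpow p q (smul (c * s) h) n)"
proof (induction n)
  case 0 thus ?case using assms by (simp add: gp_scalar_left gp_scalar_right)
next
  case (Suc n)
  have step: "gp p q (smul c h) a = gp p q a (smul (c * s) h)"
    using assms by (simp add: gp_smul_left gp_smul_right)
  have "gp p q (mpow p q (smul c h) (Suc n)) a
      = gp p q (gp p q (mpow p q (smul c h) n) a) (smul (c * s) h)"
    by (simp add: gp_assoc step)
  also have "\<dots> = gp p q a (mpow p q (smul (c * s) h) (Suc n))"
    by (simp add: Suc gp_assoc)
  finally show ?case .
qed

lemma mabs_smul: "c * c = 1 \<Longrightarrow> mabs p q (smul c h) = mabs p q h"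
  by (simp add: mabs_def gp_smul_left gp_smul_right)

lemma gfun_mneg_twisted_comm:
  assumes "mv p q a" "gp p q h a = smul s (gp p q a h)" "s * s = 1"
  shows "gp p q (gfun p q K (mneg h)) a = gp p q a (gfun p q K (smul (- s) h))"
proof (cases K)
  case GExp
  have "gp p q (gfun p q K (mneg h)) a
      = (\<lambda>S. \<Sum>r. gp p q (mpow p q (smul (-1) h) r) a S / fact r)"
    using GExp by (simp add: mneg_eq_smul gp_mexp_left)
  also have "\<dots> = gp p q a (gfun p q K (smul (- s) h))"
    using GExp mpow_smul_twisted_comm[OF assms(1,2), of "-1"] by (simp add: gp_mexp_right)
  finally show ?thesis .
next
  case GCos
  with assms show ?thesis
    by (simp add: mabs_smul mneg_eq_smul gp_scalar_left gp_scalar_right)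
next
  case GSin
  with assms show ?thesis
    by (simp add: mabs_smul mneg_eq_smul gp_smul_left gp_smul_right mult_ac)
next
  case GZero
  thus ?thesis by (simp add: gp_mzero_left gp_mzero_right)
qed

lemma mprod_twisted_comm:
  assumes "mv p q a" "\<forall>l\<in>set ls. gp p q (G l) a = gp p q a (G' l)"
  shows "gp p q (mprod p q (map G ls)) a = gp p q a (mprod p q (map G' ls))"
  using assms(2)
proof (induction ls)
  case Nil thus ?case using assms(1) by (simp add: mprod_def gp_scalar_left gp_scalar_right)
next
  case (Cons l ls)
  have "gp p q (mprod p q (map G (l # ls))) a = gp p q (G l) (gp p q (mprod p q (map G ls)) a)"
    by (simp add: mprod_def gp_assoc)
  also have "\<dots> = gp p q (gp p q a (G' l)) (mprod p q (map G' ls))"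
    using Cons by (simp add: gp_assoc[symmetric])
  also have "\<dots> = gp p q a (mprod p q (map G' (l # ls)))"
    by (simp add: mprod_def gp_assoc)
  finally show ?case .
qed

section \<open>Coorthogonal decomposition\<close>

definition bit_lists :: "nat \<Rightarrow> nat list set" where
  "bit_lists n = {js. length js = n \<and> set js \<subseteq> {0,1}}"

lemma bit_lists_0: "bit_lists 0 = {[]}"
  by (auto simp: bit_lists_def)

lemma bit_lists_Suc: "bit_lists (Suc n) = (\<lambda>(j,js). j # js) ` ({0,1} \<times> bit_lists n)"
  by (auto simp: bit_lists_def length_Suc_conv image_iff)

lemma mv_cproj1: "mv p q a \<Longrightarrow> mv p q (cproj1 p q j B a)"
  by (simp add: cproj1_def)

lemma mv_cproj: "mv p q a \<Longrightarrow> mv p q (cproj p q a ps)"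
  by (induction ps arbitrary: a) (auto simp: mv_cproj1)

lemma sum_cproj: "(\<lambda>S. \<Sum>js\<in>bit_lists (length Bs). cproj p q A (zip js Bs) S) = A"
proof (induction Bs arbitrary: A)
  case Nil
  show ?case by (simp add: bit_lists_0)
next
  case (Cons B Bs)
  have inj: "inj_on (\<lambda>(j,js). j # js) ({0::nat,1} \<times> bit_lists (length Bs))"
    by (auto simp: inj_on_def)
  have "(\<Sum>js\<in>bit_lists (length (B # Bs)). cproj p q A (zip js (B # Bs)) S)
      = (\<Sum>j\<in>{0::nat,1}. \<Sum>js\<in>bit_lists (length Bs). cproj p q (cproj1 p q j B A) (zip js Bs) S)"
    for S
    unfolding length_Cons bit_lists_Suc sum.reindex[OF inj]
    by (simp add: sum.cartesian_product case_prod_beta)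
  also have "\<dots> S = (\<Sum>j\<in>{0::nat,1}. cproj1 p q j B A S)" for S
    by (simp add: Cons.IH[of "cproj1 p q _ B A", THEN fun_cong])
  also have "\<dots> S = A S" for S
    by (simp add: cproj1_def smul_def madd_def algebra_simps)
  finally show ?case by (rule ext)
qed

lemma cproj1_twisted_comm_self:
  assumes "B \<in> Iset p q" "mv p q a"
  shows "gp p q B (cproj1 p q j B a) = smul ((-1)^j) (gp p q (cproj1 p q j B a) B)"
proof -
  obtain r where B: "mv p q B" "gp p q B B = scalar r" "r \<noteq> 0" "minv p q B = smul (1/r) B"
    using IsetE[OF assms(1)] by blast
  have conj_left: "gp p q B (gp p q (gp p q (minv p q B) a) B) = gp p q a B"
    using B assms(2) by (simp add: gp_assoc[symmetric] gp_smul_left gp_smul_right gp_scalar_left)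
  have conj_right: "gp p q (gp p q (gp p q (minv p q B) a) B) B = gp p q B a"
    using B assms(2) by (simp add: gp_assoc gp_smul_left gp_smul_right gp_scalar_right)
  have "((-1::real)^j) * ((-1)^j) = 1"
    by (simp add: power_mult_distrib[symmetric])
  then show ?thesis
    unfolding cproj1_def gp_smul_right gp_madd_right gp_smul_left gp_madd_left
      conj_left conj_right
    by (simp add: fun_eq_iff smul_def madd_def algebra_simps)
qed

lemma coorthE:
  assumes "coorth p q h C"
  obtains e where "e * e = 1" "gp p q h C = smul e (gp p q C h)"
  using assms that[of 1] that[of "-1"] by (auto simp: coorth_def mneg_eq_smul)

lemma cproj1_twisted_comm_preserved:
  assumes "mv p q a" "C \<in> Iset p q" "coorth p q h C" "gp p q h a = smul s (gp p q a h)"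
  shows "gp p q h (cproj1 p q j C a) = smul s (gp p q (cproj1 p q j C a) h)"
proof -
  obtain r where C: "minv p q C = smul (1/r) C"
    using IsetE[OF assms(2)] by blast
  obtain e where e: "e * e = 1" "gp p q h C = smul e (gp p q C h)"
    using coorthE[OF assms(3)] by blast
  \<comment> \<open>moving \<open>h\<close> across \<open>C a C\<close> picks up the sign \<open>e s e = s\<close>\<close>
  have "gp p q h (gp p q C (gp p q a C)) = smul s (gp p q C (gp p q a (gp p q C h)))"
  proof -
    have "gp p q h (gp p q C (gp p q a C)) = smul e (gp p q C (gp p q (gp p q h a) C))"
      using e by (simp add: gp_assoc[symmetric] gp_smul_left)
    also have "\<dots> = smul (e * s) (gp p q C (gp p q a (gp p q h C)))"
      using assms(4) by (simp add: gp_smul_left gp_smul_right gp_assoc)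
    also have "\<dots> = smul (e * s * e) (gp p q C (gp p q a (gp p q C h)))"
      using e by (simp only: gp_smul_right smul_smul)
    also have "e * s * e = s"
      using e(1) by (metis mult.commute mult.left_commute mult_1_right)
    finally show ?thesis .
  qed
  then have "gp p q h (gp p q (gp p q (minv p q C) a) C)
      = smul s (gp p q (gp p q (gp p q (minv p q C) a) C) h)"
    unfolding C by (simp add: gp_smul_left gp_smul_right gp_assoc mult.commute)
  then show ?thesis
    unfolding cproj1_def gp_smul_right gp_madd_right gp_smul_left gp_madd_left assms(4)
    by (simp add: fun_eq_iff smul_def madd_def algebra_simps)
qed

lemma cproj_twisted_comm_preserved:
  assumes "\<forall>(j,C)\<in>set ps. C \<in> Iset p q \<and> coorth p q h C" "mv p q a"
    "gp p q h a = smul s (gp p q a h)"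
  shows "gp p q h (cproj p q a ps) = smul s (gp p q (cproj p q a ps) h)"
  using assms
proof (induction ps arbitrary: a)
  case Nil thus ?case by simp
next
  case (Cons jC ps)
  obtain j C where jC: "jC = (j, C)" by (cases jC)
  have "gp p q h (cproj1 p q j C a) = smul s (gp p q (cproj1 p q j C a) h)"
    using Cons.prems jC by (intro cproj1_twisted_comm_preserved) auto
  with Cons.prems jC show ?case by (simp add: Cons.IH mv_cproj1)
qed

lemma cproj_twisted_comm:
  assumes "\<forall>B\<in>set Bs. B \<in> Iset p q" "\<forall>B\<in>set Bs. \<forall>B'\<in>set Bs. coorth p q B B'"
    "length js = length Bs" "mv p q A" "i < length Bs"
  shows "gp p q (Bs!i) (cproj p q A (zip js Bs))
    = smul ((-1)^(js!i)) (gp p q (cproj p q A (zip js Bs)) (Bs!i))"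
  using assms
proof (induction Bs arbitrary: js A i)
  case Nil thus ?case by simp
next
  case (Cons B Bs)
  obtain j js' where js: "js = j # js'" "length js' = length Bs"
    using Cons.prems(3) by (cases js) auto
  show ?case
  proof (cases i)
    case 0
    have "\<forall>(j,C)\<in>set (zip js' Bs). C \<in> Iset p q \<and> coorth p q B C"
      using Cons.prems by (auto dest: set_zip_rightD)
    with Cons.prems show ?thesis
      using 0 js
      by (simp add: cproj_twisted_comm_preserved cproj1_twisted_comm_self mv_cproj1)
  next
    case (Suc i')
    with Cons.prems js show ?thesis by (simp add: Cons.IH mv_cproj1)
  qed
qed

lemma gp_gfun_prod_decompose:
  assumes "\<forall>i<n. B i \<in> Iset p q" "\<forall>i<n. \<forall>i'<n. coorth p q (B i) (B i')" "mv p q A"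
  shows "gp p q (mprod p q (map (\<lambda>i. gfun p q (K i) (mneg (B i))) [0..<n])) A =
    (\<lambda>S. \<Sum>js\<in>bit_lists n. gp p q (cproj p q A (zip js (map B [0..<n])))
       (mprod p q (map (\<lambda>i. gfun p q (K i) (smul (- ((-1)^(js!i))) (B i))) [0..<n])) S)"
proof -
  let ?Bs = "map B [0..<n]"
  have "gp p q (mprod p q (map (\<lambda>i. gfun p q (K i) (mneg (B i))) [0..<n]))
      (cproj p q A (zip js ?Bs))
    = gp p q (cproj p q A (zip js ?Bs))
      (mprod p q (map (\<lambda>i. gfun p q (K i) (smul (- ((-1)^(js!i))) (B i))) [0..<n]))"
    if "js \<in> bit_lists n" for js
  proof (intro mprod_twisted_comm ballI gfun_mneg_twisted_comm mv_cproj[OF assms(3)])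
    fix i assume "i \<in> set [0..<n]"
    with that assms cproj_twisted_comm[of ?Bs p q js A i]
    show "gp p q (B i) (cproj p q A (zip js ?Bs))
        = smul ((-1)^(js!i)) (gp p q (cproj p q A (zip js ?Bs)) (B i))"
      by (auto simp: bit_lists_def)
    show "(-1::real)^(js!i) * (-1)^(js!i) = 1"
      by (simp add: power_mult_distrib[symmetric])
  qed
  then show ?thesis
    by (subst (1) sum_cproj[symmetric, of _ p q ?Bs]) (simp add: gp_sum_right)
qed

theorem lemma4p7:
  fixes p q d :: nat and f :: "nat \<Rightarrow> real^'m \<Rightarrow> real^'m \<Rightarrow> mv"
    and k :: "nat \<Rightarrow> gkind" and A :: mv and x u :: "real^'m"
  assumes "\<forall>l\<in>{1..d}. \<forall>x u. f l x u \<in> Iset p q \<and> blade p q (f l x u)"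
    and "\<forall>l\<in>{1..d}. \<forall>l'\<in>{1..d}. \<forall>x u. coorth p q (f l x u) (f l' x u)"
    and "mv p q A"
  shows "gp p q (mprod p q (map (\<lambda>l. gfun p q (k l) (mneg (f l x u))) [1..<d+1])) A =
    (\<lambda>S. \<Sum>js\<in>{js. length js = d \<and> set js \<subseteq> {0,1}}.
       gp p q (cproj p q A (zip js (map (\<lambda>l. f l x u) [1..<d+1])))
         (mprod p q (map (\<lambda>l. gfun p q (k l) (smul (- ((-1) ^ (js ! (l-1)))) (f l x u))) [1..<d+1])) S)"
proof -
  have upt_shift: "[1..<d+1] = map Suc [0..<d]"
    by (simp add: map_Suc_upt)
  have "\<forall>i<d. f (Suc i) x u \<in> Iset p q"
    and "\<forall>i<d. \<forall>i'<d. coorth p q (f (Suc i) x u) (f (Suc i') x u)"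
    using assms(1,2) by auto
  from gp_gfun_prod_decompose[OF this assms(3), of "\<lambda>i. k (Suc i)"]
  show ?thesis
    unfolding upt_shift by (simp add: bit_lists_def o_def)
qed

end
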